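(* Let $R_0^*\in SO(3)$ with unit quaternion representation $w_0^*\in\mathbb{S}^3$, let $1\le k^*<\ell$ (there is at least one outlier; $k^*$ may be such that the inlier set is $\{1,\dots,k^*\}$), let $(y_i,x_i)\in\mathbb{R}^3\times\mathbb{R}^3$ with $y_i=R_0^*x_i$ for $i=1,\dots,k^*$ (noiseless inliers) and $(y_j,x_j)$ arbitrary for $j=k^*+1,\dots,\ell$ (outliers), and let $c_1^2,\dots,c_\ell^2\ge0$. Let $\omega^*=[w_0^*;\dots;w_0^*;0;\dots;0]\in\mathbb{R}^{4(\ell+1)}$, where $w_0^*$ appears $k^*+1$ times followed by zero blocks, and $\mathcal{W}^*=\omega^*(\omega^* )^\top$. Then: (1) If $0<c_j^2<\lambda_{\min}(Q_j)$ for all $j=k^*+1,\dots,\ell$, then (SDR) is tight, admitting $\mathcal{W}^*$ as a global minimizer. (2) If $c_j^2>(w_0^* )^\top Q_jw_0^*$ for some $j\in\{k^*+1,\dots,\ell\}$, then $\mathcal{W}^*$ is not a global minimizer of (SDR).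
   Context: For $w=[w_1;w_2;w_3;w_4]\in\mathbb{S}^3$, $R(w)=\begin{bmatrix} w_1^2+w_2^2-w_3^2-w_4^2 & 2(w_2w_3-w_1w_4) & 2(w_2w_4+w_1w_3)\\ 2(w_2w_3+w_1w_4) & w_1^2+w_3^2-w_2^2-w_4^2 & 2(w_3w_4-w_1w_2)\\ 2(w_2w_4-w_1w_3) & 2(w_3w_4+w_1w_2) & w_1^2+w_4^2-w_2^2-w_3^2\end{bmatrix}\in SO(3)$; $\pm w$ are the unit quaternion representations of $R(w)$. $Q_i$ is the unique symmetric $4\times4$ matrix with $w^\top Q_iw=\|y_i-R(w)x_i\|_2^2$ for all $w\in\mathbb{S}^3$; $\lambda_{\min}$ is the smallest eigenvalue. For $\mathcal{A}\in\mathbb{R}^{4(\ell+1)\times4(\ell+1)}$, $[\mathcal{A}]_{ij}$ ($0\le i,j\le\ell$) is the $4\times4$ block in rows $4i+1..4i+4$, columns $4j+1..4j+4$. $\mathcal{Q}$ is symmetric with $[\mathcal{Q}]_{0i}=[\mathcal{Q}]_{i0}=\frac12(Q_i-c_i^2I_4)$ ($i\ge1$), other blocks zero. (QCQP): minimize $\operatorname{tr}(\mathcal{Q}\omega\omega^\top)+\sum_ic_i^2$ over $\omega\in\mathbb{R}^{4(\ell+1)}$ s.t. $[\omega\omega^\top]_{0i}=[\omega\omega^\top]_{ii}$ ($i=1..\ell$), $\operatorname{tr}([\omega\omega^\top]_{00})=1$. (SDR): minimize $\operatorname{tr}(\mathcal{Q}\mathcal{W})+\sum_ic_i^2$ over symmetric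 $\mathcal{W}\succeq0$ s.t. $[\mathcal{W}]_{0i}=[\mathcal{W}]_{ii}$ ($i=1..\ell$), $\operatorname{tr}([\mathcal{W}]_{00})=1$. (SDR) is tight if it admits $\hat\omega\hat\omega^\top$ as a global minimizer, where $\hat\omega$ is a global minimizer of (QCQP). *)

theory Defs
  imports "HOL-Analysis.Analysis"
begin

definition rotq :: "real^4 \<Rightarrow> real^3^3" where
  "rotq w = (let w1 = w$1; w2 = w$2; w3 = w$3; w4 = w$4 in vector [
     vector [w1^2+w2^2-w3^2-w4^2, 2*(w2*w3-w1*w4), 2*(w2*w4+w1*w3)],
     vector [2*(w2*w3+w1*w4), w1^2+w3^2-w2^2-w4^2, 2*(w3*w4-w1*w2)],
     vector [2*(w2*w4-w1*w3), 2*(w3*w4+w1*w2), w1^2+w4^2-w2^2-w3^2]])"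

definition Qmat :: "real^3 \<Rightarrow> real^3 \<Rightarrow> real^4^4" where
  "Qmat y x = (THE Q. transpose Q = Q \<and>
      (\<forall>w::real^4. norm w = 1 \<longrightarrow> w \<bullet> (Q *v w) = (norm (y - rotq w *v x))^2))"

definition lambda_min :: "real^4^4 \<Rightarrow> real" where
  "lambda_min Q = Min {\<mu>. \<exists>v::real^4. v \<noteq> 0 \<and> Q *v v = \<mu> *\<^sub>R v}"

text \<open>Flat index a (0..3) inside a 4-block corresponds to quaternion component a+1.\<close>
definition qi :: "nat \<Rightarrow> 4" where
  "qi a = of_nat (Suc a)"

text \<open>Matrices in R^{4(l+1) x 4(l+1)} are functions nat => nat => real, with entries
  (p,q), p,q < 4(l+1) (0-based); block [A]_ij consists of rows 4i..4i+3, cols 4j..4j+3.\<close>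
definition bigQ :: "nat \<Rightarrow> (nat \<Rightarrow> real^3) \<Rightarrow> (nat \<Rightarrow> real^3) \<Rightarrow> (nat \<Rightarrow> real)
                    \<Rightarrow> nat \<Rightarrow> nat \<Rightarrow> real" where
  "bigQ l y x c2 p q =
     (let i = p div 4; j = q div 4; a = p mod 4; b = q mod 4 in
      if i = 0 \<and> 1 \<le> j \<and> j \<le> l then
        (1/2) * ((Qmat (y j) (x j)) $ qi a $ qi b - (if a = b then c2 j else 0))
      else if j = 0 \<and> 1 \<le> i \<and> i \<le> l then
        (1/2) * ((Qmat (y i) (x i)) $ qi a $ qi b - (if a = b then c2 i else 0))
      else 0)"

definition outer :: "(nat \<Rightarrow> real) \<Rightarrow> nat \<Rightarrow> nat \<Rightarrow> real" where
  "outer \<omega> = (\<lambda>p q. \<omega> p * \<omega> q)"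

definition sdr_obj :: "nat \<Rightarrow> (nat \<Rightarrow> real^3) \<Rightarrow> (nat \<Rightarrow> real^3) \<Rightarrow> (nat \<Rightarrow> real)
                    \<Rightarrow> (nat \<Rightarrow> nat \<Rightarrow> real) \<Rightarrow> real" where
  "sdr_obj l y x c2 W =
     (\<Sum>p<4*(l+1). \<Sum>q<4*(l+1). bigQ l y x c2 p q * W q p) + (\<Sum>i=1..l. c2 i)"

definition block_constraints :: "nat \<Rightarrow> (nat \<Rightarrow> nat \<Rightarrow> real) \<Rightarrow> bool" where
  "block_constraints l W =
     ((\<forall>i\<in>{1..l}. \<forall>a<4. \<forall>b<4. W a (4*i+b) = W (4*i+a) (4*i+b)) \<and>
      (\<Sum>a<4. W a a) = 1)"

definition sdr_feasible :: "nat \<Rightarrow> (nat \<Rightarrow> nat \<Rightarrow> real) \<Rightarrow> bool" where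
  "sdr_feasible l W =
     ((\<forall>p<4*(l+1). \<forall>q<4*(l+1). W p q = W q p) \<and>
      (\<forall>v::nat \<Rightarrow> real. 0 \<le> (\<Sum>p<4*(l+1). \<Sum>q<4*(l+1). v p * W p q * v q)) \<and>
      block_constraints l W)"

definition sdr_global_min where
  "sdr_global_min l y x c2 W =
     (sdr_feasible l W \<and> (\<forall>W'. sdr_feasible l W' \<longrightarrow> sdr_obj l y x c2 W \<le> sdr_obj l y x c2 W'))"

definition qcqp_feasible :: "nat \<Rightarrow> (nat \<Rightarrow> real) \<Rightarrow> bool" where
  "qcqp_feasible l \<omega> = block_constraints l (outer \<omega>)"

definition qcqp_global_min where
  "qcqp_global_min l y x c2 \<omega> =
     (qcqp_feasible l \<omega> \<and> (\<forall>\<omega>'. qcqp_feasible l \<omega>' \<longrightarrow>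
         sdr_obj l y x c2 (outer \<omega>) \<le> sdr_obj l y x c2 (outer \<omega>')))"

definition sdr_tight where
  "sdr_tight l y x c2 = (\<exists>\<omega>. qcqp_global_min l y x c2 \<omega> \<and> sdr_global_min l y x c2 (outer \<omega>))"

definition omega_star :: "nat \<Rightarrow> real^4 \<Rightarrow> nat \<Rightarrow> real" where
  "omega_star k w0 p = (if p div 4 \<le> k then w0 $ qi (p mod 4) else 0)"

end

(*
  On a feasible point W of the relaxation, symmetry and the constraints [W]_0i = [W]_ii turn
  the objective into  sum_i tr ((Q_i - c_i^2 I) [W]_ii) + sum_i c_i^2.  Every diagonal block
  [W]_ii is positive semidefinite, and its 2 x 2 principal minors against [W]_00 give
  tr [W]_ii <= tr [W]_00 = 1.  Since tr (M B) >= 0 for positive semidefinite M and B (write B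
  as a Gram matrix), an inlier block contributes at least -c_i^2, and an outlier block with
  c_j^2 < lambda_min (Q_j) at least 0, as Q_j - c_j^2 I is positive semidefinite.  The rank-one point W* attains all these bounds,
  because w0' Q_i w0 = |y_i - R(w0) x_i|^2 = 0 for the inliers.
  Conversely, if c_j^2 > w0' Q_j w0 for an outlier j, copying w0 also into block j yields a
  feasible rank-one point whose objective is smaller by c_j^2 - w0' Q_j w0.
*)

theory Submission
  imports Defs
begin

section \<open>Quadratic forms of symmetric matrices\<close>

lemma nonneg_quadratic_linear_coeff_eq_0:
  fixes a b :: real
  assumes "\<And>t. 0 \<le> t\<^sup>2 * a + 2 * t * b" and "0 \<le> a"
  shows "b = 0"
proof (rule ccontr)
  assume "b \<noteq> 0"
  define t where "t = - b / (a + 1)"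
  have "a + 1 \<noteq> 0" using \<open>0 \<le> a\<close> by simp
  then have "t\<^sup>2 * a + 2 * t * b = - (b\<^sup>2 * (a + 2) / (a + 1)\<^sup>2)"
    unfolding t_def power2_eq_square by (simp add: divide_simps) (simp add: algebra_simps)
  moreover have "0 < b\<^sup>2 * (a + 2) / (a + 1)\<^sup>2"
    using \<open>b \<noteq> 0\<close> \<open>0 \<le> a\<close> by (simp add: zero_less_mult_iff)
  ultimately show False using assms(1)[of t] by linarith
qed

lemma symmetric_matrix_inner:
  fixes A :: "real^'n^'n"
  assumes "transpose A = A"
  shows "(A *v u) \<bullet> w = u \<bullet> (A *v w)"
  by (metis assms dot_lmul_matrix inner_commute transpose_matrix_vector)

lemma quadratic_form_scaleR:
  fixes A :: "real^'n^'n"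
  shows "(c *\<^sub>R u) \<bullet> (A *v (c *\<^sub>R u)) = c\<^sup>2 * (u \<bullet> (A *v u))"
  by (simp add: matrix_vector_mult_scaleR power2_eq_square)

lemma quadratic_form_sgn:
  fixes A :: "real^'n^'n"
  shows "w \<bullet> (A *v w) = (norm w)\<^sup>2 * (sgn w \<bullet> (A *v sgn w))"
proof -
  have "w = norm w *\<^sub>R sgn w" by (cases "w = 0") (simp_all add: sgn_div_norm)
  then show ?thesis by (metis quadratic_form_scaleR)
qed

lemma psd_quadratic_form_eq_0_imp_kernel:
  fixes A :: "real^'n^'n"
  assumes sym: "transpose A = A" and psd: "\<And>u. 0 \<le> u \<bullet> (A *v u)"
    and zero: "v \<bullet> (A *v v) = 0"
  shows "A *v v = 0"
proof -
  have "u \<bullet> (A *v v) = 0" for u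
  proof (rule nonneg_quadratic_linear_coeff_eq_0)
    fix t :: real
    have "(v + t *\<^sub>R u) \<bullet> (A *v (v + t *\<^sub>R u))
        = t\<^sup>2 * (u \<bullet> (A *v u)) + 2 * t * (u \<bullet> (A *v v))"
      using zero symmetric_matrix_inner[OF sym, of u v]
      by (simp add: matrix_vector_right_distrib matrix_vector_mult_scaleR inner_add_left
          inner_add_right inner_commute power2_eq_square algebra_simps)
    then show "0 \<le> t\<^sup>2 * (u \<bullet> (A *v u)) + 2 * t * (u \<bullet> (A *v v))"
      using psd[of "v + t *\<^sub>R u"] by linarith
  qed (rule psd)
  from this[of "A *v v"] show ?thesis by simp
qed

lemma symmetric_quadratic_form_eq_0_imp_eq_0:
  fixes A :: "real^'n^'n"
  assumes "transpose A = A" and "\<And>w. w \<bullet> (A *v w) = 0"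
  shows "A = 0"
  using psd_quadratic_form_eq_0_imp_kernel[OF assms(1)] assms(2)
  by (simp add: matrix_eq)

lemma symmetric_eq_if_quadratic_forms_eq_on_sphere:
  fixes A B :: "real^'n^'n"
  assumes "transpose A = A" and "transpose B = B"
    and eq: "\<And>w. norm w = 1 \<Longrightarrow> w \<bullet> (A *v w) = w \<bullet> (B *v w)"
  shows "A = B"
proof -
  have "transpose (A - B) = A - B"
    using assms(1,2) by (simp add: transpose_def vec_eq_iff)
  moreover have "w \<bullet> ((A - B) *v w) = 0" for w
    using eq[of "sgn w"] quadratic_form_sgn[of w A] quadratic_form_sgn[of w B]
    by (cases "w = 0") (simp_all add: norm_sgn matrix_vector_mult_diff_rdistrib inner_diff_right)
  ultimately show ?thesis using symmetric_quadratic_form_eq_0_imp_eq_0 by force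
qed

lemma matrix_vector_mult_diff_scaleR_mat:
  fixes Q :: "real^'n^'n"
  shows "(Q - c *\<^sub>R mat 1) *v u = Q *v u - c *\<^sub>R u"
  by (simp add: matrix_vector_mult_diff_rdistrib flip: scaleR_matrix_vector_assoc)

lemma eigenvalues_finite:
  fixes Q :: "real^'n^'n"
  assumes sym: "transpose Q = Q"
  shows "finite {\<mu>. \<exists>v. v \<noteq> 0 \<and> Q *v v = \<mu> *\<^sub>R v}"
proof -
  define E where "E = {\<mu>. \<exists>v. v \<noteq> 0 \<and> Q *v v = \<mu> *\<^sub>R v}"
  define ev where "ev \<mu> = (SOME v. v \<noteq> 0 \<and> Q *v v = \<mu> *\<^sub>R v)" for \<mu>
  have ev_nz: "ev \<mu> \<noteq> 0" and ev_eig: "Q *v ev \<mu> = \<mu> *\<^sub>R ev \<mu>" if "\<mu> \<in> E" for \<mu>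
  proof -
    have "\<exists>v. v \<noteq> 0 \<and> Q *v v = \<mu> *\<^sub>R v" using that by (simp add: E_def)
    then have "ev \<mu> \<noteq> 0 \<and> Q *v ev \<mu> = \<mu> *\<^sub>R ev \<mu>" unfolding ev_def by (rule someI_ex)
    then show "ev \<mu> \<noteq> 0" "Q *v ev \<mu> = \<mu> *\<^sub>R ev \<mu>" by simp_all
  qed
  have inj: "inj_on ev E"
  proof (rule inj_onI)
    fix \<mu> \<nu> assume \<mu>: "\<mu> \<in> E" and \<nu>: "\<nu> \<in> E" and eq: "ev \<mu> = ev \<nu>"
    have "\<mu> *\<^sub>R ev \<mu> = Q *v ev \<nu>" using ev_eig[OF \<mu>] eq by simp
    also have "\<dots> = \<nu> *\<^sub>R ev \<mu>" using ev_eig[OF \<nu>] eq by simp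
    finally show "\<mu> = \<nu>" using ev_nz[OF \<mu>] by (simp add: scaleR_cancel_right)
  qed
  have "pairwise orthogonal (ev ` E)"
  proof (rule pairwise_imageI)
    fix \<mu> \<nu> assume \<mu>: "\<mu> \<in> E" and \<nu>: "\<nu> \<in> E" and "\<mu> \<noteq> \<nu>"
    have "\<mu> * (ev \<mu> \<bullet> ev \<nu>) = \<nu> * (ev \<mu> \<bullet> ev \<nu>)"
      using symmetric_matrix_inner[OF sym, of "ev \<mu>" "ev \<nu>"] ev_eig[OF \<mu>] ev_eig[OF \<nu>] by simp
    then show "orthogonal (ev \<mu>) (ev \<nu>)" using \<open>\<mu> \<noteq> \<nu>\<close> by (simp add: orthogonal_def)
  qed
  moreover have "0 \<notin> ev ` E" using ev_nz by fastforce
  ultimately have "finite (ev ` E)"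
    by (intro finiteI_independent pairwise_orthogonal_independent)
  then show ?thesis using finite_imageD[OF _ inj] by (simp add: E_def)
qed

lemma quadratic_form_attains_min_on_sphere:
  fixes Q :: "real^'n^'n"
  obtains v where "norm v = 1" and "\<And>u. (v \<bullet> (Q *v v)) * (u \<bullet> u) \<le> u \<bullet> (Q *v u)"
proof -
  let ?f = "\<lambda>u. u \<bullet> (Q *v u)"
  have "continuous_on (sphere 0 1) ?f"
    by (intro continuous_intros matrix_vector_mult_linear_continuous_on)
  then obtain v where v: "norm v = 1" and min: "\<And>u. norm u = 1 \<Longrightarrow> ?f v \<le> ?f u"
    using continuous_attains_inf[OF compact_sphere, of 0 1 ?f] by auto
  have "?f v * (u \<bullet> u) \<le> ?f u" for u
    using min[of "sgn u"] quadratic_form_sgn[of u Q]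
    by (cases "u = 0") (simp_all add: norm_sgn dot_square_norm mult.commute)
  then show ?thesis by (rule that[OF v])
qed

lemma lambda_min_le_quadratic_form:
  fixes Q :: "real^4^4"
  assumes sym: "transpose Q = Q"
  shows "lambda_min Q * (w \<bullet> w) \<le> w \<bullet> (Q *v w)"
proof -
  obtain v where v: "norm v = 1" and min: "\<And>u. (v \<bullet> (Q *v v)) * (u \<bullet> u) \<le> u \<bullet> (Q *v u)"
    using quadratic_form_attains_min_on_sphere[where Q = Q] by blast
  define m where "m = v \<bullet> (Q *v v)"
  define M where "M = Q - m *\<^sub>R mat 1"
  have M_form: "u \<bullet> (M *v u) = u \<bullet> (Q *v u) - m * (u \<bullet> u)" for u
    by (simp add: M_def matrix_vector_mult_diff_scaleR_mat inner_diff_right)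
  have "transpose M = M"
    using sym by (auto simp: M_def transpose_def vec_eq_iff mat_def)
  moreover have "0 \<le> u \<bullet> (M *v u)" for u
    using min[of u] by (simp add: M_form m_def)
  moreover have "v \<bullet> (M *v v) = 0"
    using v by (simp add: M_form m_def dot_square_norm)
  ultimately have "M *v v = 0" by (rule psd_quadratic_form_eq_0_imp_kernel)
  then have "Q *v v = m *\<^sub>R v"
    by (simp add: M_def matrix_vector_mult_diff_scaleR_mat)
  moreover have "v \<noteq> 0" using v by auto
  ultimately have "m \<in> {\<mu>. \<exists>v. v \<noteq> 0 \<and> Q *v v = \<mu> *\<^sub>R v}" by blast
  then have "lambda_min Q \<le> m"
    unfolding lambda_min_def by (rule Min_le[OF eigenvalues_finite[OF sym]])
  then have "lambda_min Q * (w \<bullet> w) \<le> m * (w \<bullet> w)" by (simp add: mult_right_mono)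
  also have "\<dots> \<le> w \<bullet> (Q *v w)" using min by (simp add: m_def)
  finally show ?thesis .
qed

section \<open>The matrices Q_i\<close>

lemma vector_4 [simp]:
  "(vector [a, b, c, d] :: ('a::zero)^4) $ 1 = a"
  "(vector [a, b, c, d] :: ('a::zero)^4) $ 2 = b"
  "(vector [a, b, c, d] :: ('a::zero)^4) $ 3 = c"
  "(vector [a, b, c, d] :: ('a::zero)^4) $ 4 = d"
  unfolding vector_def by simp_all

lemma norm_rotq_diff:
  "(norm (y - rotq w *v x))\<^sup>2 = y \<bullet> y - 2 * (y \<bullet> (rotq w *v x)) + (w \<bullet> w)\<^sup>2 * (x \<bullet> x)"
  unfolding rotq_def Let_def power2_norm_eq_inner
  by (simp add: inner_vec_def matrix_vector_mult_def sum_4 sum_3 power2_eq_square algebra_simps)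

(* s I - 2 P, where P is the symmetric matrix of the quadratic form w |-> y . R(w) x *)
definition cost_matrix :: "real^3 \<Rightarrow> real^3 \<Rightarrow> real^4^4" where
  "cost_matrix y x = (let y1 = y$1; y2 = y$2; y3 = y$3; x1 = x$1; x2 = x$2; x3 = x$3;
     s = y \<bullet> y + x \<bullet> x;
     P11 = y1*x1 + y2*x2 + y3*x3; P22 = y1*x1 - y2*x2 - y3*x3;
     P33 = -y1*x1 + y2*x2 - y3*x3; P44 = -y1*x1 - y2*x2 + y3*x3;
     P12 = y3*x2 - y2*x3; P13 = y1*x3 - y3*x1; P14 = y2*x1 - y1*x2;
     P23 = y1*x2 + y2*x1; P24 = y1*x3 + y3*x1; P34 = y2*x3 + y3*x2 in
     vector [vector [s - 2*P11, -2*P12, -2*P13, -2*P14],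
             vector [-2*P12, s - 2*P22, -2*P23, -2*P24],
             vector [-2*P13, -2*P23, s - 2*P33, -2*P34],
             vector [-2*P14, -2*P24, -2*P34, s - 2*P44]])"

lemma cost_matrix_symmetric: "transpose (cost_matrix y x) = cost_matrix y x"
  unfolding transpose_def cost_matrix_def Let_def vec_eq_iff forall_4 by simp

lemma cost_matrix_quadratic_form:
  "w \<bullet> (cost_matrix y x *v w) = (w \<bullet> w) * (y \<bullet> y + x \<bullet> x) - 2 * (y \<bullet> (rotq w *v x))"
  unfolding cost_matrix_def Let_def rotq_def
  by (simp add: inner_vec_def matrix_vector_mult_def sum_4 sum_3 power2_eq_square algebra_simps)

lemma Qmat_eq_cost_matrix: "Qmat y x = cost_matrix y x"
proof -
  have cost_sphere: "w \<bullet> (cost_matrix y x *v w) = (norm (y - rotq w *v x))\<^sup>2" if "norm w = 1" for w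
  proof -
    have "w \<bullet> w = 1" using that by (simp add: dot_square_norm)
    then show ?thesis by (simp add: cost_matrix_quadratic_form norm_rotq_diff)
  qed
  show ?thesis
    unfolding Qmat_def
  proof (rule the_equality)
    fix Q
    assume Q: "transpose Q = Q \<and>
      (\<forall>w. norm w = 1 \<longrightarrow> w \<bullet> (Q *v w) = (norm (y - rotq w *v x))\<^sup>2)"
    show "Q = cost_matrix y x"
      by (rule symmetric_eq_if_quadratic_forms_eq_on_sphere)
        (use Q in \<open>simp_all add: cost_matrix_symmetric cost_sphere\<close>)
  qed (simp add: cost_matrix_symmetric cost_sphere)
qed

lemma Qmat_symmetric: "transpose (Qmat y x) = Qmat y x"
  by (simp add: Qmat_eq_cost_matrix cost_matrix_symmetric)

lemma Qmat_quadratic_form: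
  assumes "norm w = 1"
  shows "w \<bullet> (Qmat y x *v w) = (norm (y - rotq w *v x))\<^sup>2"
proof -
  have "w \<bullet> w = 1" using assms by (simp add: dot_square_norm)
  then show ?thesis by (simp add: Qmat_eq_cost_matrix cost_matrix_quadratic_form norm_rotq_diff)
qed

lemma Qmat_psd: "0 \<le> w \<bullet> (Qmat y x *v w)"
  using quadratic_form_sgn[of w "Qmat y x"] Qmat_quadratic_form[of "sgn w"]
  by (cases "w = 0") (simp_all add: norm_sgn)

lemma Qmat_inlier: "norm w = 1 \<Longrightarrow> y = rotq w *v x \<Longrightarrow> w \<bullet> (Qmat y x *v w) = 0"
  by (simp add: Qmat_quadratic_form)

section \<open>Positive semidefinite matrices indexed by natural numbers\<close>

definition qform :: "nat \<Rightarrow> (nat \<Rightarrow> nat \<Rightarrow> real) \<Rightarrow> (nat \<Rightarrow> real) \<Rightarrow> real" where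
  "qform n B v = (\<Sum>p<n. \<Sum>q<n. v p * B p q * v q)"

definition sym_matrix :: "nat \<Rightarrow> (nat \<Rightarrow> nat \<Rightarrow> real) \<Rightarrow> bool" where
  "sym_matrix n B \<longleftrightarrow> (\<forall>p<n. \<forall>q<n. B p q = B q p)"

definition psd_matrix :: "nat \<Rightarrow> (nat \<Rightarrow> nat \<Rightarrow> real) \<Rightarrow> bool" where
  "psd_matrix n B \<longleftrightarrow> (\<forall>v. 0 \<le> qform n B v)"

lemma qform_cong: "(\<And>p. p < n \<Longrightarrow> v p = v' p) \<Longrightarrow> qform n B v = qform n B v'"
  by (simp add: qform_def)

lemma qform_Suc:
  assumes "sym_matrix (Suc n) B"
  shows "qform (Suc n) B v = qform n B v + 2 * v n * (\<Sum>p<n. v p * B p n) + (v n)\<^sup>2 * B n n"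
proof -
  have "(\<Sum>q<n. v n * B n q * v q) = v n * (\<Sum>p<n. v p * B p n)"
    using assms by (simp add: sym_matrix_def sum_distrib_left mult_ac)
  moreover have "(\<Sum>p<n. v p * B p n * v n) = v n * (\<Sum>p<n. v p * B p n)"
    by (simp add: sum_distrib_left mult_ac)
  ultimately show ?thesis
    by (simp add: qform_def sum.distrib power2_eq_square)
qed

lemma psd_principal_submatrix:
  assumes psd: "psd_matrix N B" and inj: "inj_on \<sigma> {..<n}" and sub: "\<sigma> ` {..<n} \<subseteq> {..<N}"
  shows "psd_matrix n (\<lambda>a b. B (\<sigma> a) (\<sigma> b))"
  unfolding psd_matrix_def
proof
  fix v :: "nat \<Rightarrow> real"
  define v' where "v' p = (if p \<in> \<sigma> ` {..<n} then v (the_inv_into {..<n} \<sigma> p) else 0)" for p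
  have v': "v' (\<sigma> a) = v a" if "a < n" for a
    using that inj by (simp add: v'_def the_inv_into_f_f)
  have restrict: "(\<Sum>p\<in>\<sigma> ` {..<n}. v' p * g p) = (\<Sum>p<N. v' p * g p)" for g :: "nat \<Rightarrow> real"
    using sub by (intro sum.mono_neutral_left) (auto simp: v'_def)
  have "qform n (\<lambda>a b. B (\<sigma> a) (\<sigma> b)) v
      = (\<Sum>p\<in>\<sigma> ` {..<n}. v' p * (\<Sum>q\<in>\<sigma> ` {..<n}. v' q * B p q))"
    unfolding qform_def using inj by (simp add: sum.reindex v' sum_distrib_left mult_ac)
  also have "\<dots> = (\<Sum>p<N. v' p * (\<Sum>q<N. v' q * B p q))"
    by (simp only: restrict)
  also have "\<dots> = qform N B v'"
    by (simp add: qform_def sum_distrib_left mult_ac)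
  finally show "0 \<le> qform n (\<lambda>a b. B (\<sigma> a) (\<sigma> b)) v"
    using psd by (simp add: psd_matrix_def)
qed

lemma psd_diag_nonneg:
  assumes "psd_matrix N B" and "p < N"
  shows "0 \<le> B p p"
proof -
  have "psd_matrix 1 (\<lambda>_ _. B p p)"
    using psd_principal_submatrix[OF assms(1), of "\<lambda>_. p" 1] assms(2) by (auto simp: inj_on_def)
  then have "0 \<le> qform 1 (\<lambda>_ _. B p p) (\<lambda>_. 1)" by (simp only: psd_matrix_def)
  then show ?thesis by (simp add: qform_def)
qed

lemma psd_pair:
  assumes "psd_matrix N B" and "s < N" "t < N" "s \<noteq> t"
  shows "0 \<le> \<alpha>\<^sup>2 * B s s + \<alpha> * \<beta> * (B s t + B t s) + \<beta>\<^sup>2 * B t t"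
proof -
  let ?\<sigma> = "\<lambda>a::nat. if a = 0 then s else t"
  have "psd_matrix 2 (\<lambda>a b. B (?\<sigma> a) (?\<sigma> b))"
    by (rule psd_principal_submatrix[OF assms(1)]) (use assms in \<open>auto simp: inj_on_def\<close>)
  then have "0 \<le> qform 2 (\<lambda>a b. B (?\<sigma> a) (?\<sigma> b)) (\<lambda>a. if a = 0 then \<alpha> else \<beta>)"
    by (simp add: psd_matrix_def)
  then show ?thesis
    by (simp add: qform_def numeral_2_eq_2 lessThan_Suc power2_eq_square algebra_simps)
qed

lemma psd_zero_diag_imp_zero:
  assumes psd: "psd_matrix N B" and sym: "sym_matrix N B"
    and "s < N" "t < N" and zero: "B t t = 0"
  shows "B s t = 0"
proof (cases "s = t")
  case False
  show ?thesis
  proof (rule nonneg_quadratic_linear_coeff_eq_0)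
    fix \<alpha> :: real
    show "0 \<le> \<alpha>\<^sup>2 * B s s + 2 * \<alpha> * B s t"
      using psd_pair[OF psd \<open>s < N\<close> \<open>t < N\<close> False, of \<alpha> 1] sym \<open>s < N\<close> \<open>t < N\<close> zero
      by (simp add: sym_matrix_def)
  qed (rule psd_diag_nonneg[OF psd \<open>s < N\<close>])
qed (simp add: zero)

lemma psd_diag_le_if_offdiag_eq:
  assumes psd: "psd_matrix N B" and sym: "sym_matrix N B"
    and "s < N" "t < N" and eq: "B s t = B t t"
  shows "B t t \<le> B s s"
proof (cases "s = t")
  case False
  show ?thesis
    using psd_pair[OF psd \<open>s < N\<close> \<open>t < N\<close> False, of 1 "-1"] sym \<open>s < N\<close> \<open>t < N\<close> eq
    by (simp add: sym_matrix_def)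
qed simp

lemma psd_schur_complement:
  assumes sym: "sym_matrix (Suc n) B" and psd: "psd_matrix (Suc n) B"
  shows "psd_matrix n (\<lambda>p q. B p q - B p n * B q n / B n n)"
  unfolding psd_matrix_def
proof
  fix v
  define d where "d = B n n"
  define s where "s = (\<Sum>p<n. v p * B p n)"
  have "qform n (\<lambda>p q. B p q - B p n * B q n / d) v
      = qform n B v - (\<Sum>p<n. \<Sum>q<n. (v p * B p n) * (v q * B q n)) / d"
    by (simp add: qform_def algebra_simps sum_subtractf sum_divide_distrib)
  also have "\<dots> = qform n B v - s * s / d"
    by (simp add: s_def sum_product)
  also have "\<dots> = qform (Suc n) B (v(n := - s / d))"
    \<comment> \<open>the value of v n minimising the form\<close>
  proof -
    have "qform n B (v(n := - s / d)) = qform n B v" by (rule qform_cong) simp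
    moreover have "(\<Sum>p<n. (v(n := - s / d)) p * B p n) = s" by (simp add: s_def)
    ultimately show ?thesis
      by (simp add: qform_Suc[OF sym] d_def[symmetric] power2_eq_square)
  qed
  finally show "0 \<le> qform n (\<lambda>p q. B p q - B p n * B q n / B n n) v"
    using psd by (simp add: psd_matrix_def d_def)
qed

(* Clear if B n n \<noteq> 0; otherwise the whole column vanishes, and x / 0 = 0 in HOL. *)
lemma psd_column_mult_div_diag:
  assumes "sym_matrix (Suc n) B" and "psd_matrix (Suc n) B" and "p < Suc n"
  shows "B p n * B n n / B n n = B p n"
  using psd_zero_diag_imp_zero[OF assms(2,1,3), of n] by (cases "B n n = 0") simp_all

lemma psd_gram_factorization:
  assumes "sym_matrix n B" and "psd_matrix n B"
  shows "\<exists>U. \<forall>p<n. \<forall>q<n. B p q = (\<Sum>k<n. U k p * U k q)"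
  using assms
proof (induction n arbitrary: B)
  case 0
  then show ?case by simp
next
  case (Suc n)
  define d where "d = B n n"
  define S where "S p q = B p q - B p n * B q n / d" for p q
  have "sym_matrix n S"
    using Suc.prems(1) by (simp add: sym_matrix_def S_def mult.commute)
  moreover have "psd_matrix n S"
    unfolding S_def d_def by (rule psd_schur_complement[OF Suc.prems])
  ultimately obtain U where U: "\<forall>p<n. \<forall>q<n. S p q = (\<Sum>k<n. U k p * U k q)"
    using Suc.IH by blast
  have col: "B p n * d / d = B p n" if "p < Suc n" for p
    unfolding d_def using Suc.prems that by (rule psd_column_mult_div_diag)
  define U' where "U' k p = (if k < n then (if p < n then U k p else 0) else B p n / sqrt d)" for k p
  have "B p q = (\<Sum>k<Suc n. U' k p * U' k q)" if p: "p < Suc n" and q: "q < Suc n" for p q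
  proof -
    have "0 \<le> d" using psd_diag_nonneg[OF Suc.prems(2)] by (simp add: d_def)
    then have "U' n p * U' n q = B p n * B q n / d" by (simp add: U'_def)
    moreover have "(\<Sum>k<n. U' k p * U' k q) = (if p < n \<and> q < n then S p q else 0)"
      using U by (cases "p < n"; cases "q < n") (simp_all add: U'_def)
    ultimately have "(\<Sum>k<Suc n. U' k p * U' k q)
        = (if p < n \<and> q < n then S p q else 0) + B p n * B q n / d"
      by simp
    also have "\<dots> = B p q"
    proof (cases "p < n \<and> q < n")
      case True
      then show ?thesis by (simp add: S_def)
    next
      case False
      then consider "q = n" | "p = n" using p q by linarith
      then show ?thesis
      proof cases
        case 1
        then show ?thesis using col[OF p] False by (simp add: d_def)
      next
        case 2
        have "B n q = B q n" using Suc.prems(1) q by (simp add: sym_matrix_def)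
        then show ?thesis using 2 col[OF q] False by (simp add: d_def mult.commute)
      qed
    qed
    finally show ?thesis by simp
  qed
  then show ?case by blast
qed

section \<open>Blocks of size 4\<close>

lemma qi_image: "qi ` {..<4} = UNIV"
proof -
  have "{..<4::nat} = {0, 1, 2, 3}" by auto
  moreover have "(UNIV :: 4 set) = {1, 2, 3, 4}" using exhaust_4 by auto
  ultimately show ?thesis by (simp add: qi_def)
qed

lemma qi_bij: "bij_betw qi {..<4} UNIV"
  unfolding bij_betw_def using qi_image by (simp add: eq_card_imp_inj_on)

lemma qi_eq_iff: "a < 4 \<Longrightarrow> b < 4 \<Longrightarrow> qi a = qi b \<longleftrightarrow> a = b"
  using inj_on_eq_iff[OF bij_betw_imp_inj_on[OF qi_bij]] by simp

lemma sum_qi: "(\<Sum>a<4. f (qi a)) = sum f UNIV"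
  using sum.reindex_bij_betw[OF qi_bij] by blast

lemma sum_qi2: "(\<Sum>a<4. \<Sum>b<4. f (qi a) (qi b)) = (\<Sum>i\<in>UNIV. \<Sum>j\<in>UNIV. f i j)"
proof -
  have "(\<Sum>a<4. \<Sum>b<4. f (qi a) (qi b)) = (\<Sum>a<4. \<Sum>j\<in>UNIV. f (qi a) j)"
    by (rule sum.cong[OF refl]) (rule sum_qi)
  also have "\<dots> = (\<Sum>i\<in>UNIV. \<Sum>j\<in>UNIV. f i j)"
    by (rule sum_qi)
  finally show ?thesis .
qed

lemma ex_vec_qi: "\<exists>u :: 'a^4. \<forall>a<4. u $ qi a = g a"
proof -
  have "(\<chi> i. g (the_inv_into {..<4} qi i)) $ qi a = g a" if "a < 4" for a
    using that bij_betw_imp_inj_on[OF qi_bij] by (simp add: the_inv_into_f_f)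
  then show ?thesis by blast
qed

definition frob_inner :: "real^4^4 \<Rightarrow> (nat \<Rightarrow> nat \<Rightarrow> real) \<Rightarrow> real" where
  "frob_inner M B = (\<Sum>a<4. \<Sum>b<4. M $ qi a $ qi b * B a b)"

lemma frob_inner_cong:
  "(\<And>a b. a < 4 \<Longrightarrow> b < 4 \<Longrightarrow> B a b = B' a b) \<Longrightarrow> frob_inner M B = frob_inner M B'"
  by (simp add: frob_inner_def)

lemma frob_inner_rank_one: "frob_inner M (\<lambda>a b. u $ qi a * u $ qi b) = u \<bullet> (M *v u)"
  using sum_qi2[of "\<lambda>i j. u $ i * (M $ i $ j * u $ j)"]
  by (simp add: frob_inner_def inner_vec_def matrix_vector_mult_def sum_distrib_left mult_ac)

lemma frob_inner_diff: "frob_inner (M - N) B = frob_inner M B - frob_inner N B"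
  by (simp add: frob_inner_def left_diff_distrib sum_subtractf)

lemma frob_inner_scaleR_mat: "frob_inner (c *\<^sub>R mat 1) B = c * (\<Sum>a<4. B a a)"
proof -
  have "(\<Sum>b<4. (c *\<^sub>R mat 1) $ qi a $ qi b * B a b) = c * B a a" if "a < 4" for a
  proof -
    have "(\<Sum>b<4. (c *\<^sub>R mat 1) $ qi a $ qi b * B a b) = (\<Sum>b<4. if b = a then c * B a b else 0)"
      using that by (intro sum.cong refl) (auto simp: mat_def qi_eq_iff)
    with that show ?thesis by simp
  qed
  then show ?thesis by (simp add: frob_inner_def sum_distrib_left)
qed

lemma frob_inner_nonneg:
  assumes M: "\<And>w. 0 \<le> w \<bullet> (M *v w)" and "sym_matrix 4 B" and "psd_matrix 4 B"
  shows "0 \<le> frob_inner M B"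
proof -
  obtain U :: "nat \<Rightarrow> nat \<Rightarrow> real" where U: "\<forall>a<4. \<forall>b<4. B a b = (\<Sum>k<4. U k a * U k b)"
    using psd_gram_factorization[OF assms(2,3)] by blast
  have "frob_inner M B = (\<Sum>a<4. \<Sum>b<4. \<Sum>k<4. M $ qi a $ qi b * (U k a * U k b))"
    unfolding frob_inner_def using U by (intro sum.cong refl) (simp add: sum_distrib_left)
  also have "\<dots> = (\<Sum>a<4. \<Sum>k<4. \<Sum>b<4. M $ qi a $ qi b * (U k a * U k b))"
    by (rule sum.cong[OF refl], rule sum.swap)
  also have "\<dots> = (\<Sum>k<4. frob_inner M (\<lambda>a b. U k a * U k b))"
    unfolding frob_inner_def by (rule sum.swap)
  also have "\<dots> \<ge> 0"
  proof (rule sum_nonneg)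
    fix k
    obtain u :: "real^4" where u: "\<forall>a<4. u $ qi a = U k a" using ex_vec_qi by blast
    have "frob_inner M (\<lambda>a b. U k a * U k b) = frob_inner M (\<lambda>a b. u $ qi a * u $ qi b)"
      using u by (intro frob_inner_cong) simp
    then show "0 \<le> frob_inner M (\<lambda>a b. U k a * U k b)"
      using M by (simp add: frob_inner_rank_one)
  qed
  finally show ?thesis .
qed

lemma frob_inner_shift_ge:
  assumes "\<And>w. 0 \<le> w \<bullet> (Q *v w)" and "sym_matrix 4 B" and "psd_matrix 4 B"
    and "(\<Sum>a<4. B a a) \<le> 1" and "0 \<le> c"
  shows "- c \<le> frob_inner (Q - c *\<^sub>R mat 1) B"
proof -
  have "c * (\<Sum>a<4. B a a) \<le> c" using assms(4,5) by (simp add: mult_left_le)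
  moreover have "0 \<le> frob_inner Q B" using assms(1-3) by (rule frob_inner_nonneg)
  ultimately show ?thesis by (simp add: frob_inner_diff frob_inner_scaleR_mat)
qed

lemma frob_inner_shift_nonneg:
  assumes "transpose Q = Q" and "c \<le> lambda_min Q" and "sym_matrix 4 B" and "psd_matrix 4 B"
  shows "0 \<le> frob_inner (Q - c *\<^sub>R mat 1) B"
proof (rule frob_inner_nonneg[OF _ assms(3,4)])
  fix w :: "real^4"
  have "c * (w \<bullet> w) \<le> lambda_min Q * (w \<bullet> w)" using assms(2) by (simp add: mult_right_mono)
  also have "\<dots> \<le> w \<bullet> (Q *v w)" using assms(1) by (rule lambda_min_le_quadratic_form)
  finally show "0 \<le> w \<bullet> ((Q - c *\<^sub>R mat 1) *v w)"
    by (simp add: matrix_vector_mult_diff_scaleR_mat inner_diff_right)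
qed

section \<open>The semidefinite relaxation\<close>

lemma sdr_feasible_iff:
  "sdr_feasible l W \<longleftrightarrow>
     sym_matrix (4 * (l + 1)) W \<and> psd_matrix (4 * (l + 1)) W \<and> block_constraints l W"
  by (simp add: sdr_feasible_def sym_matrix_def psd_matrix_def qform_def)

lemma sum_blocks: "(\<Sum>p<4 * (m::nat). f p) = (\<Sum>i<m. \<Sum>a<4. f (4 * i + a))"
  by (induction m) (simp_all add: numeral_eq_Suc lessThan_Suc add.assoc)

definition diag_block :: "(nat \<Rightarrow> nat \<Rightarrow> real) \<Rightarrow> nat \<Rightarrow> nat \<Rightarrow> nat \<Rightarrow> real" where
  "diag_block W i a b = W (4 * i + a) (4 * i + b)"

lemma sdr_feasible_diag_block:
  assumes "sdr_feasible l W" and "i \<le> l"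
  shows "sym_matrix 4 (diag_block W i)" and "psd_matrix 4 (diag_block W i)"
proof -
  have W: "sym_matrix (4 * (l + 1)) W" "psd_matrix (4 * (l + 1)) W"
    using assms(1) by (simp_all add: sdr_feasible_iff)
  have sub: "(\<lambda>a. 4 * i + a) ` {..<4} \<subseteq> {..<4 * (l + 1)}"
    using assms(2) by auto
  show "sym_matrix 4 (diag_block W i)"
    using W(1) sub by (auto simp: sym_matrix_def diag_block_def)
  show "psd_matrix 4 (diag_block W i)"
    unfolding diag_block_def by (rule psd_principal_submatrix[OF W(2) _ sub]) (simp add: inj_on_def)
qed

lemma sdr_feasible_trace_diag_block_le_1:
  assumes F: "sdr_feasible l W" and i: "i \<in> {1..l}"
  shows "(\<Sum>a<4. diag_block W i a a) \<le> 1"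
proof -
  have W: "sym_matrix (4 * (l + 1)) W" "psd_matrix (4 * (l + 1)) W" "block_constraints l W"
    using F by (simp_all add: sdr_feasible_iff)
  have "W (4 * i + a) (4 * i + a) \<le> W a a" if "a < 4" for a
  proof (rule psd_diag_le_if_offdiag_eq[OF W(2) W(1)])
    show "a < 4 * (l + 1)" "4 * i + a < 4 * (l + 1)" using that i by auto
    show "W a (4 * i + a) = W (4 * i + a) (4 * i + a)"
      using W(3) that i by (simp add: block_constraints_def)
  qed
  then have "(\<Sum>a<4. diag_block W i a a) \<le> (\<Sum>a<4. W a a)"
    by (auto simp: diag_block_def intro: sum_mono)
  also have "\<dots> = 1" using W(3) by (simp add: block_constraints_def)
  finally show ?thesis .
qed

lemma bigQ_block:
  assumes "a < 4" "b < 4"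
  shows "bigQ l y x c2 (4 * i + a) (4 * j + b) =
    (if i = 0 \<and> j \<in> {1..l} then (Qmat (y j) (x j) - c2 j *\<^sub>R mat 1) $ qi a $ qi b / 2
     else if j = 0 \<and> i \<in> {1..l} then (Qmat (y i) (x i) - c2 i *\<^sub>R mat 1) $ qi a $ qi b / 2
     else 0)"
  using assms by (simp add: bigQ_def Let_def mat_def qi_eq_iff)

(* Only the blocks [Q]_0i = [Q]_i0 are nonzero, and by symmetry and [W]_0i = [W]_ii both
   are paired with [W]_ii. *)
lemma sdr_obj_eq_sum_frob_inner:
  assumes sym: "sym_matrix (4 * (l + 1)) W" and bc: "block_constraints l W"
  shows "sdr_obj l y x c2 W =
    (\<Sum>i=1..l. frob_inner (Qmat (y i) (x i) - c2 i *\<^sub>R mat 1) (diag_block W i)) + (\<Sum>i=1..l. c2 i)"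
proof -
  define T where "T i = frob_inner (Qmat (y i) (x i) - c2 i *\<^sub>R mat 1) (diag_block W i)" for i
  define F where "F i j = (\<Sum>a<4. \<Sum>b<4. bigQ l y x c2 (4 * i + a) (4 * j + b) * W (4 * j + b) (4 * i + a))"
    for i j
  have W_row: "W (4 * i + b) a = diag_block W i a b" and W_col: "W b (4 * i + a) = diag_block W i a b"
    if "i \<in> {1..l}" "a < 4" "b < 4" for i a b
  proof -
    have "W a (4 * i + b) = diag_block W i a b" "W b (4 * i + a) = diag_block W i b a"
      using bc that by (simp_all add: block_constraints_def diag_block_def)
    moreover have "W (4 * i + b) a = W a (4 * i + b)" "diag_block W i b a = diag_block W i a b"
      using sym that by (simp_all add: sym_matrix_def diag_block_def)
    ultimately show "W (4 * i + b) a = diag_block W i a b" "W b (4 * i + a) = diag_block W i a b"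
      by simp_all
  qed
  have F: "F i j = (if i = 0 \<and> j \<in> {1..l} then T j / 2 else if j = 0 \<and> i \<in> {1..l} then T i / 2 else 0)"
    for i j
    by (auto simp: F_def T_def frob_inner_def bigQ_block W_row W_col sum_divide_distrib
        intro!: sum.cong)
  have "(\<Sum>p<4 * (l + 1). \<Sum>q<4 * (l + 1). bigQ l y x c2 p q * W q p) = (\<Sum>i<l + 1. \<Sum>j<l + 1. F i j)"
    unfolding sum_blocks F_def by (rule sum.cong[OF refl], rule sum.swap)
  also have "\<dots> = (\<Sum>i=1..l. T i)"
  proof -
    have "{..<l + 1} = insert 0 {1..l}" by auto
    then show ?thesis by (simp add: F sum.distrib flip: sum_divide_distrib)
  qed
  finally show ?thesis by (simp add: sdr_obj_def T_def)
qed

lemma sdr_feasible_outer: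
  assumes "block_constraints l (outer \<omega>)"
  shows "sdr_feasible l (outer \<omega>)"
proof -
  have "qform n (outer \<omega>) v = (\<Sum>p<n. v p * \<omega> p)\<^sup>2" for n v
    by (simp add: qform_def outer_def power2_eq_square sum_product mult_ac)
  then show ?thesis
    using assms by (simp add: sdr_feasible_iff sym_matrix_def psd_matrix_def outer_def mult.commute)
qed

definition stack :: "nat set \<Rightarrow> real^4 \<Rightarrow> nat \<Rightarrow> real" where
  "stack S w p = (if p div 4 \<in> S then w $ qi (p mod 4) else 0)"

lemma omega_star_eq_stack: "omega_star k w = stack {..k} w"
  by (simp add: fun_eq_iff omega_star_def stack_def)

lemma stack_block: "a < 4 \<Longrightarrow> stack S w (4 * i + a) = (if i \<in> S then w $ qi a else 0)"
  by (simp add: stack_def)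

lemma stack_block_0: "a < 4 \<Longrightarrow> 0 \<in> S \<Longrightarrow> stack S w a = w $ qi a"
  by (simp add: stack_def)

lemma diag_block_outer_stack:
  "a < 4 \<Longrightarrow> b < 4 \<Longrightarrow>
    diag_block (outer (stack S w)) i a b = (if i \<in> S then w $ qi a * w $ qi b else 0)"
  by (simp add: diag_block_def outer_def stack_block)

lemma block_constraints_outer_stack:
  assumes "0 \<in> S" and "norm w = 1"
  shows "block_constraints l (outer (stack S w))"
proof -
  have "(\<Sum>a<4. outer (stack S w) a a) = w \<bullet> w"
    using assms(1) by (simp add: outer_def stack_block_0 inner_vec_def sum_qi[of "\<lambda>i. w $ i * w $ i"])
  also have "\<dots> = 1" using assms(2) by (simp add: dot_square_norm)
  finally show ?thesis
    using assms(1) by (auto simp: block_constraints_def outer_def stack_block stack_block_0)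
qed

lemma sdr_obj_outer_stack:
  assumes "0 \<in> S" and "norm w = 1"
  shows "sdr_obj l y x c2 (outer (stack S w)) =
    (\<Sum>i\<in>{1..l} \<inter> S. w \<bullet> (Qmat (y i) (x i) *v w) - c2 i) + (\<Sum>i=1..l. c2 i)"
proof -
  have "frob_inner (Qmat (y i) (x i) - c2 i *\<^sub>R mat 1) (diag_block (outer (stack S w)) i)
      = (if i \<in> S then w \<bullet> (Qmat (y i) (x i) *v w) - c2 i else 0)" (is "frob_inner ?M _ = _") for i
  proof -
    have "frob_inner ?M (diag_block (outer (stack S w)) i)
        = frob_inner ?M (\<lambda>a b. if i \<in> S then w $ qi a * w $ qi b else 0)"
      by (rule frob_inner_cong) (simp add: diag_block_outer_stack)
    moreover have "w \<bullet> (?M *v w) = w \<bullet> (Qmat (y i) (x i) *v w) - c2 i"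
      using assms(2) by (simp add: matrix_vector_mult_diff_scaleR_mat inner_diff_right dot_square_norm)
    ultimately show ?thesis
      by (cases "i \<in> S") (simp_all add: frob_inner_rank_one, simp add: frob_inner_def)
  qed
  moreover have "sym_matrix (4 * (l + 1)) (outer (stack S w))"
    by (simp add: sym_matrix_def outer_def mult.commute)
  ultimately show ?thesis
    using block_constraints_outer_stack[OF assms]
    by (simp add: sdr_obj_eq_sum_frob_inner sum.inter_restrict)
qed

lemma omega_star_sdr_global_min:
  assumes w0: "norm w0 = 1"
    and inliers: "\<forall>i\<in>{1..k}. y i = rotq w0 *v x i" and c_nonneg: "\<forall>i\<in>{1..k}. 0 \<le> c2 i"
    and outliers: "\<forall>j\<in>{k+1..l}. c2 j \<le> lambda_min (Qmat (y j) (x j))"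
  shows "sdr_global_min l y x c2 (outer (omega_star k w0))"
proof -
  have obj_star: "sdr_obj l y x c2 (outer (omega_star k w0))
      = (\<Sum>i\<in>{1..l} \<inter> {..k}. - c2 i) + (\<Sum>i=1..l. c2 i)"
    using inliers by (simp add: omega_star_eq_stack sdr_obj_outer_stack w0 Qmat_inlier)
  have "sdr_obj l y x c2 (outer (omega_star k w0)) \<le> sdr_obj l y x c2 W" if W: "sdr_feasible l W" for W
  proof -
    have "(\<Sum>i\<in>{1..l} \<inter> {..k}. - c2 i) \<le>
        (\<Sum>i=1..l. frob_inner (Qmat (y i) (x i) - c2 i *\<^sub>R mat 1) (diag_block W i))"
      unfolding sum.inter_restrict[OF finite_atLeastAtMost]
    proof (rule sum_mono)
      fix i assume i: "i \<in> {1..l}"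
      note block = sdr_feasible_diag_block[OF W, of i]
      show "(if i \<in> {..k} then - c2 i else 0) \<le> frob_inner (Qmat (y i) (x i) - c2 i *\<^sub>R mat 1) (diag_block W i)"
      proof (cases "i \<le> k")
        case True
        then show ?thesis
          using i c_nonneg block sdr_feasible_trace_diag_block_le_1[OF W i]
          by (simp add: frob_inner_shift_ge Qmat_psd)
      next
        case False
        then show ?thesis
          using i outliers block by (simp add: frob_inner_shift_nonneg Qmat_symmetric)
      qed
    qed
    then show ?thesis
      using W by (simp add: obj_star sdr_obj_eq_sum_frob_inner sdr_feasible_iff)
  qed
  moreover have "sdr_feasible l (outer (omega_star k w0))"
    by (simp add: omega_star_eq_stack sdr_feasible_outer block_constraints_outer_stack w0)
  ultimately show ?thesis by (simp add: sdr_global_min_def)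
qed

lemma omega_star_not_sdr_global_min:
  assumes w0: "norm w0 = 1" and j: "j \<in> {k+1..l}" and cj: "w0 \<bullet> (Qmat (y j) (x j) *v w0) < c2 j"
  shows "\<not> sdr_global_min l y x c2 (outer (omega_star k w0))"
proof -
  let ?S = "insert j {..k}"
  have "{1..l} \<inter> ?S = insert j ({1..l} \<inter> {..k})" and "j \<notin> {1..l} \<inter> {..k}"
    using j by auto
  then have "sdr_obj l y x c2 (outer (stack ?S w0)) =
      sdr_obj l y x c2 (outer (omega_star k w0)) + (w0 \<bullet> (Qmat (y j) (x j) *v w0) - c2 j)"
    by (simp add: omega_star_eq_stack sdr_obj_outer_stack w0)
  moreover have "sdr_feasible l (outer (stack ?S w0))"
    by (simp add: sdr_feasible_outer block_constraints_outer_stack w0)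
  ultimately show ?thesis
    using cj by (auto simp: sdr_global_min_def)
qed

lemma sdr_tight_if_outer_global_min:
  assumes "block_constraints l (outer \<omega>)" and "sdr_global_min l y x c2 (outer \<omega>)"
  shows "sdr_tight l y x c2"
proof -
  have "qcqp_global_min l y x c2 \<omega>"
    using assms sdr_feasible_outer
    by (simp add: qcqp_global_min_def qcqp_feasible_def sdr_global_min_def)
  then show ?thesis using assms(2) by (auto simp: sdr_tight_def)
qed

theorem theorem3p2:
  fixes w0 :: "real^4" and k l :: nat and y x :: "nat \<Rightarrow> real^3" and c2 :: "nat \<Rightarrow> real"
  assumes "norm w0 = 1"
    and "1 \<le> k" and "k < l"
    and "\<forall>i\<in>{1..k}. y i = rotq w0 *v x i"
    and "\<forall>i\<in>{1..l}. 0 \<le> c2 i"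
  shows "((\<forall>j\<in>{k+1..l}. 0 < c2 j \<and> c2 j < lambda_min (Qmat (y j) (x j))) \<longrightarrow>
            sdr_tight l y x c2 \<and> sdr_global_min l y x c2 (outer (omega_star k w0)))
       \<and> ((\<exists>j\<in>{k+1..l}. c2 j > w0 \<bullet> (Qmat (y j) (x j) *v w0)) \<longrightarrow>
            \<not> sdr_global_min l y x c2 (outer (omega_star k w0)))"
proof (rule conjI; rule impI)
  assume "\<forall>j\<in>{k+1..l}. 0 < c2 j \<and> c2 j < lambda_min (Qmat (y j) (x j))"
  then have "sdr_global_min l y x c2 (outer (omega_star k w0))"
    using assms by (intro omega_star_sdr_global_min) auto
  moreover have "block_constraints l (outer (omega_star k w0))"
    using assms(1) by (simp add: omega_star_eq_stack block_constraints_outer_stack)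
  ultimately show "sdr_tight l y x c2 \<and> sdr_global_min l y x c2 (outer (omega_star k w0))"
    using sdr_tight_if_outer_global_min by blast
next
  assume "\<exists>j\<in>{k+1..l}. c2 j > w0 \<bullet> (Qmat (y j) (x j) *v w0)"
  then show "\<not> sdr_global_min l y x c2 (outer (omega_star k w0))"
    using omega_star_not_sdr_global_min[OF assms(1)] by blast
qed

end
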